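(* There exist $a_1\ge1$ and $b_1\in(0,1)$, depending only on $\alpha$, such that for every $a>a_1$ and every $b\in(0,b_1)$ we have $\mathcal D(t,b)\subset B(p,r_p)$ for all $p\in\mathcal T(a,b)$ and all $t\in[z_p,-1]$.
   Context: $\mathbb H=\mathbb R^3$, $p=(x_p,y_p,z_p)$, $\rho_p=\sqrt{x_p^2+y_p^2}$, group law $(x,y,z)\cdot(x',y',z')=(x+x',y+y',z+z'+\tfrac12(xy'-yx'))$, dilations $\delta_\lambda(x,y,z)=(\lambda x,\lambda y,\lambda^2z)$. Fix $\alpha>0$ such that $d_\alpha(p,q)=\inf\{r>0:\delta_{1/r}(p^{-1}\cdot q)\in B_\alpha\}$ is a distance, $B_\alpha$ the closed Euclidean ball of radius $\alpha$ at $0$. $B(p,r)=\{q:d_\alpha(q,p)\le r\}$, $r_p=d_\alpha(0,p)$. $\mathcal T(a,b)=\{p: z_p<-a,\ \rho_p<b\}$ and $\mathcal D(t,b)=\{q: z_q=t,\ \rho_q<b\}$. *)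

theory Defs
  imports "HOL-Analysis.Analysis"
begin

type_synonym heis = "real \<times> real \<times> real"

definition hmult :: "heis \<Rightarrow> heis \<Rightarrow> heis" where
  "hmult p q = (case p of (x,y,z) \<Rightarrow> case q of (x',y',z') \<Rightarrow>
      (x + x', y + y', z + z' + (x*y' - y*x')/2))"

definition hinv :: "heis \<Rightarrow> heis" where
  "hinv p = (case p of (x,y,z) \<Rightarrow> (-x, -y, -z))"

definition hdil :: "real \<Rightarrow> heis \<Rightarrow> heis" where
  "hdil l p = (case p of (x,y,z) \<Rightarrow> (l*x, l*y, l^2*z))"

definition xc :: "heis \<Rightarrow> real" where "xc p = fst p"
definition yc :: "heis \<Rightarrow> real" where "yc p = fst (snd p)"
definition zc :: "heis \<Rightarrow> real" where "zc p = snd (snd p)"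
definition rho :: "heis \<Rightarrow> real" where "rho p = sqrt (xc p ^ 2 + yc p ^ 2)"

definition Balpha :: "real \<Rightarrow> heis set" where
  "Balpha \<alpha> = {p. xc p ^ 2 + yc p ^ 2 + zc p ^ 2 \<le> \<alpha>^2}"

definition dalpha :: "real \<Rightarrow> heis \<Rightarrow> heis \<Rightarrow> real" where
  "dalpha \<alpha> p q = Inf {r. r > 0 \<and> hdil (1/r) (hmult (hinv p) q) \<in> Balpha \<alpha>}"

definition is_distance :: "(heis \<Rightarrow> heis \<Rightarrow> real) \<Rightarrow> bool" where
  "is_distance d \<longleftrightarrow>
     (\<forall>p q. d p q \<ge> 0) \<and> (\<forall>p q. d p q = 0 \<longleftrightarrow> p = q) \<and>
     (\<forall>p q. d p q = d q p) \<and> (\<forall>p q s. d p s \<le> d p q + d q s)"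

definition hball :: "real \<Rightarrow> heis \<Rightarrow> real \<Rightarrow> heis set" where
  "hball \<alpha> p r = {q. dalpha \<alpha> q p \<le> r}"

definition rp :: "real \<Rightarrow> heis \<Rightarrow> real" where
  "rp \<alpha> p = dalpha \<alpha> (0,0,0) p"

definition Tset :: "real \<Rightarrow> real \<Rightarrow> heis set" where
  "Tset a b = {p. zc p < -a \<and> rho p < b}"

definition Dset :: "real \<Rightarrow> real \<Rightarrow> heis set" where
  "Dset t b = {q. zc q = t \<and> rho q < b}"

end

theory Submission imports Defs begin

(* Idea of the proof.  d_alpha(p,q) is the infimum of the "admissible radii" r > 0 with
   delta_{1/r}(p^{-1} q) in B_alpha.  In coordinates, for the pair ((u,v,t),(x,y,z)) and
   s = r^2, r is admissible iff  ((x-u)^2 + (y-v)^2) s + (z - t + (vx - uy)/2)^2 <= alpha^2 s^2.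
   For p in T(a,b) and q in D(t,b) with z_p <= t <= -1 and b small, every radius admissible
   for the pair (0,p) is admissible for (q,p): the horizontal part is of size b^2, the
   symplectic term vx - uy is bounded by b^2, and moving the height from z_p to t only makes
   the vertical term smaller.  Since the admissible set for (0,p) is nonempty (every point has
   admissible radii), the infimum over the larger set is smaller, i.e. d(q,p) <= r_p. *)

definition admissible_radii :: "real \<Rightarrow> heis \<Rightarrow> heis \<Rightarrow> real set" where
  "admissible_radii \<alpha> p q = {r. 0 < r \<and> hdil (1/r) (hmult (hinv p) q) \<in> Balpha \<alpha>}"

lemma dalpha_eq_Inf_admissible_radii: "dalpha \<alpha> p q = Inf (admissible_radii \<alpha> p q)"
  by (simp add: dalpha_def admissible_radii_def)

lemma dalpha_le_if_admissible_radii_subset: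
  assumes "admissible_radii \<alpha> p' q' \<noteq> {}"
    and "admissible_radii \<alpha> p' q' \<subseteq> admissible_radii \<alpha> p q"
  shows "dalpha \<alpha> p q \<le> dalpha \<alpha> p' q'"
proof -
  have "bdd_below (admissible_radii \<alpha> p q)"
    by (rule bdd_belowI[of _ 0]) (simp add: admissible_radii_def)
  then show ?thesis
    unfolding dalpha_eq_Inf_admissible_radii by (rule cInf_superset_mono[OF assms(1) _ assms(2)])
qed

lemma admissible_radii_iff:
  "r \<in> admissible_radii \<alpha> (u,v,t) (x,y,z) \<longleftrightarrow>
     0 < r \<and> ((x-u)^2 + (y-v)^2) * r^2 + (z - t + (v * x - u * y)/2)^2 \<le> \<alpha>^2 * (r^2)^2"
proof (cases "0 < r")
  case True
  have "hdil (1/r) (hmult (hinv (u,v,t)) (x,y,z)) =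
        ((x-u)/r, (y-v)/r, (z - t + (v * x - u * y)/2) / r^2)"
    by (simp add: hdil_def hmult_def hinv_def field_simps power2_eq_square)
  moreover have "((x-u)/r)^2 + ((y-v)/r)^2 + ((z - t + (v * x - u * y)/2) / r^2)^2 =
        (((x-u)^2 + (y-v)^2) * r^2 + (z - t + (v * x - u * y)/2)^2) / (r^2)^2"
    using True by (simp add: field_simps power2_eq_square)
  ultimately show ?thesis
    using True by (simp add: admissible_radii_def Balpha_def xc_def yc_def zc_def divide_le_eq)
qed (simp add: admissible_radii_def)

text \<open>Every pair of points has admissible radii: large dilations shrink into the ball.\<close>
lemma admissible_radii_nonempty:
  assumes "0 < \<alpha>"
  shows "admissible_radii \<alpha> p q \<noteq> {}"
proof -
  obtain u v t where p: "p = (u,v,t)" by (cases p) auto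
  obtain x y z where q: "q = (x,y,z)" by (cases q) auto
  define H where "H = (x-u)^2 + (y-v)^2"
  define D where "D = z - t + (v * x - u * y)/2"
  define s where "s = 1 + 2*H/\<alpha>^2 + 2*\<bar>D\<bar>/\<alpha>"
  have "0 \<le> H" by (simp add: H_def)
  then have s_pos: "0 < s" unfolding s_def using assms by (intro add_pos_nonneg) auto
  have "2*H \<le> \<alpha>^2 * s" using assms \<open>0 \<le> H\<close> by (simp add: s_def field_simps)
  from mult_right_mono[OF this less_imp_le[OF s_pos]]
  have horizontal: "H * s \<le> \<alpha>^2 * s^2 / 2" by (simp add: power2_eq_square)
  have "2*\<bar>D\<bar> \<le> \<alpha> * s" using assms \<open>0 \<le> H\<close> by (simp add: s_def field_simps)
  then have "(2*\<bar>D\<bar>)^2 \<le> (\<alpha> * s)^2" by (rule power_mono) simp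
  then have "4 * D^2 \<le> \<alpha>^2 * s^2" by (simp add: power_mult_distrib)
  then have vertical: "D^2 \<le> \<alpha>^2 * s^2 / 2" using zero_le_power2[of D] by linarith
  have "sqrt s \<in> admissible_radii \<alpha> p q"
    using horizontal vertical s_pos by (simp add: p q admissible_radii_iff H_def D_def)
  then show ?thesis by blast
qed

lemma symplectic_term_bound:
  fixes x y u v :: real
  shows "\<bar>v * x - u * y\<bar> \<le> (x^2 + y^2 + u^2 + v^2) / 2"
proof -
  have "\<bar>v * x - u * y\<bar> \<le> \<bar>v\<bar> * \<bar>x\<bar> + \<bar>u\<bar> * \<bar>y\<bar>"
    by (metis abs_mult abs_triangle_ineq4)
  moreover have "2 * \<bar>v\<bar> * \<bar>x\<bar> \<le> \<bar>v\<bar>^2 + \<bar>x\<bar>^2" "2 * \<bar>u\<bar> * \<bar>y\<bar> \<le> \<bar>u\<bar>^2 + \<bar>y\<bar>^2"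
    by (rule sum_squares_bound)+
  ultimately show ?thesis by simp
qed

lemma horizontal_distance_bound:
  fixes x y u v :: real
  shows "(x-u)^2 + (y-v)^2 \<le> 2 * (x^2 + y^2 + u^2 + v^2)"
  using sum_squares_bound[of x "-u"] sum_squares_bound[of y "-v"]
  by (simp add: power2_diff)

lemma vertical_term_bound:
  fixes z t w :: real
  assumes "\<bar>w\<bar> \<le> 1" and "z \<le> t" and "t \<le> -1"
  shows "(z - t + w/2)^2 \<le> z^2 + z/2"
proof -
  have "\<bar>z - t + w/2\<bar> \<le> -z - 1/2" using assms by (simp add: abs_le_iff)
  then have "(z - t + w/2)^2 \<le> (-z - 1/2)^2"
    by (metis abs_ge_zero power2_abs power_mono)
  also have "\<dots> \<le> z^2 + z/2" using assms by (simp add: power2_eq_square algebra_simps)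
  finally show ?thesis .
qed

text \<open>The scalar inequality behind the comparison: with \<open>c = \<alpha> r\<^sup>2\<close>, a horizontal
  contribution \<open>h \<le> c/8\<close> is absorbed by the gain \<open>|z|/2\<close> in the vertical contribution \<open>d\<close>.\<close>
lemma absorb_horizontal_into_vertical:
  fixes c h d z :: real
  assumes "z \<le> -1" and "-z \<le> c" and "h \<le> c/8" and "d \<le> z^2 + z/2"
  shows "h + d \<le> c^2"
proof (cases "c \<le> -4*z")
  case True
  have "z^2 \<le> c^2" using power_mono[of "-z" c 2] assms by simp
  then show ?thesis using True assms by linarith
next
  case False
  have "(-4*z)^2 \<le> c^2" using False assms by (intro power_mono) auto
  then have "z^2 \<le> c^2/16" by (simp add: power_mult_distrib)
  moreover have "c \<le> c^2" using False assms by (simp add: power2_eq_square)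
  ultimately show ?thesis using assms by linarith
qed

lemma admissible_radii_origin_subset:
  fixes x y z u v t \<alpha> :: real
  assumes "x^2 + y^2 + u^2 + v^2 \<le> \<alpha>/16" and "x^2 + y^2 + u^2 + v^2 \<le> 2"
    and "z \<le> t" and "t \<le> -1"
  shows "admissible_radii \<alpha> (0,0,0) (x,y,z) \<subseteq> admissible_radii \<alpha> (u,v,t) (x,y,z)"
proof
  fix r assume "r \<in> admissible_radii \<alpha> (0,0,0) (x,y,z)"
  then have r_pos: "0 < r" and origin: "(x^2 + y^2) * r^2 + z^2 \<le> \<alpha>^2 * (r^2)^2"
    by (simp_all add: admissible_radii_iff)
  define s where "s = r^2"
  have s_pos: "0 < s" using r_pos by (simp add: s_def)
  have "0 \<le> x^2 + y^2 + u^2 + v^2" by simp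
  then have "0 \<le> \<alpha>" using assms(1) by linarith
  have "0 \<le> (x^2 + y^2) * s" using s_pos by simp
  then have "z^2 \<le> \<alpha>^2 * s^2" using origin unfolding s_def by linarith
  then have "(-z)^2 \<le> (\<alpha> * s)^2" by (simp add: power_mult_distrib)
  then have height: "-z \<le> \<alpha> * s" by (rule power2_le_imp_le) (use \<open>0 \<le> \<alpha>\<close> s_pos in simp)
  have "(x-u)^2 + (y-v)^2 \<le> \<alpha>/8" using horizontal_distance_bound[of x u y v] assms(1) by simp
  from mult_right_mono[OF this less_imp_le[OF s_pos]]
  have horizontal: "((x-u)^2 + (y-v)^2) * s \<le> \<alpha> * s / 8" by simp
  have "\<bar>v * x - u * y\<bar> \<le> 1" using symplectic_term_bound[of v x u y] assms(2) by simp
  then have vertical: "(z - t + (v * x - u * y)/2)^2 \<le> z^2 + z/2"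
    using vertical_term_bound assms(3,4) by blast
  have "((x-u)^2 + (y-v)^2) * s + (z - t + (v * x - u * y)/2)^2 \<le> (\<alpha> * s)^2"
    using absorb_horizontal_into_vertical[OF _ height horizontal vertical] assms(3,4) by simp
  then show "r \<in> admissible_radii \<alpha> (u,v,t) (x,y,z)"
    using r_pos by (simp add: admissible_radii_iff s_def power_mult_distrib)
qed

lemma rho_less_imp_sum_squares_less:
  assumes "rho p < b"
  shows "xc p ^ 2 + yc p ^ 2 < b^2"
proof -
  have "rho p ^ 2 < b^2" using assms by (intro power_strict_mono) (auto simp: rho_def)
  then show ?thesis by (simp add: rho_def)
qed

lemma Dset_subset_hball:
  assumes "0 < b" and "b < min (1/2) (\<alpha>/16)" and "p \<in> Tset a b" and "zc p \<le> t" and "t \<le> -1"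
  shows "Dset t b \<subseteq> hball \<alpha> p (rp \<alpha> p)"
proof
  fix q assume q: "q \<in> Dset t b"
  obtain x y z where p_eq: "p = (x,y,z)" by (cases p) auto
  obtain u v where q_eq: "q = (u,v,t)" using q by (cases q) (auto simp: Dset_def zc_def)
  have "x^2 + y^2 < b^2" "u^2 + v^2 < b^2"
    using rho_less_imp_sum_squares_less[of p b] rho_less_imp_sum_squares_less[of q b] assms(3) q
    by (simp_all add: p_eq q_eq Tset_def Dset_def xc_def yc_def)
  moreover have "b * b \<le> (\<alpha>/16) * (1/2)" "b * b \<le> (1/2) * (1/2)"
    using assms(1,2) by (intro mult_mono; simp)+
  ultimately have "x^2 + y^2 + u^2 + v^2 \<le> \<alpha>/16" "x^2 + y^2 + u^2 + v^2 \<le> 2"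
    using assms(2) by (simp_all add: power2_eq_square)
  then have "admissible_radii \<alpha> (0,0,0) p \<subseteq> admissible_radii \<alpha> q p"
    using assms(4,5) unfolding p_eq q_eq by (intro admissible_radii_origin_subset) (auto simp: zc_def)
  moreover have "0 < \<alpha>" using assms(1,2) by simp
  ultimately have "dalpha \<alpha> q p \<le> rp \<alpha> p"
    unfolding rp_def by (intro dalpha_le_if_admissible_radii_subset admissible_radii_nonempty)
  then show "q \<in> hball \<alpha> p (rp \<alpha> p)" by (simp add: hball_def)
qed

theorem lemma4p5:
  fixes \<alpha> :: real
  assumes "\<alpha> > 0" and "is_distance (dalpha \<alpha>)"
  shows "\<exists>a1 b1. a1 \<ge> 1 \<and> 0 < b1 \<and> b1 < 1 \<and>
    (\<forall>a b. a > a1 \<longrightarrow> 0 < b \<longrightarrow> b < b1 \<longrightarrow>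
      (\<forall>p \<in> Tset a b. \<forall>t. zc p \<le> t \<and> t \<le> -1 \<longrightarrow>
          Dset t b \<subseteq> hball \<alpha> p (rp \<alpha> p)))"
proof (rule exI[of _ 1], rule exI[of _ "min (1/2) (\<alpha>/16)"], intro conjI)
  show "0 < min (1/2) (\<alpha>/16)" using assms(1) by simp
  show "\<forall>a b. a > 1 \<longrightarrow> 0 < b \<longrightarrow> b < min (1/2) (\<alpha>/16) \<longrightarrow>
      (\<forall>p \<in> Tset a b. \<forall>t. zc p \<le> t \<and> t \<le> -1 \<longrightarrow> Dset t b \<subseteq> hball \<alpha> p (rp \<alpha> p))"
    using Dset_subset_hball by blast
qed simp_all

end
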